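(* For a positive integer $q$ and an integer $n$ define $$\bar{C}_{q}(n) = \frac{1}{|SL_2(\mathbb{Z}/q\mathbb{Z})|}\sum_{w\in SL_2(\mathbb{Z}/q\mathbb{Z})} c_{q}\big(d(w)-n\big),$$ where for $w=\begin{pmatrix} a & b\\ c & d\end{pmatrix}$ we write $d(w)=d$, and $c_q(m)=\sum_{a \bmod q,\ \gcd(a,q)=1} e^{2\pi i a m/q}$ is the Ramanujan sum. Then for every positive integer $n$ the series $\mathfrak{G}(n)=\sum_{q=1}^{\infty}\bar{C}_q(n)$ converges (absolutely) and $$\mathfrak{G}(n)=\prod_{p}\Big(1+\sum_{k=1}^{\infty}\bar{C}_{p^k}(n)\Big)=\zeta(2)\prod_{p\mid n}\frac{p-1}{p},$$ where the first product is over all primes and the last product is over the distinct primes dividing $n$.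
   Context: $\zeta$ is the Riemann zeta function, $\zeta(2)=\pi^2/6$. The Ramanujan sum $c_q(m)$ depends only on $m$ modulo $q$, so $c_q(d(w)-n)$ is well defined for $d(w)\in\mathbb{Z}/q\mathbb{Z}$. *)

theory Defs
  imports "HOL-Analysis.Analysis" "HOL-Number_Theory.Number_Theory"
begin

text \<open>SL_2(Z/qZ), with matrices (a,b,c,d) = [[a,b],[c,d]] and entries represented
  by their residues in {0..q-1}.\<close>
definition SL2 :: "nat \<Rightarrow> (int \<times> int \<times> int \<times> int) set" where
  "SL2 q = {(a, b, c, d). a \<in> {0..<int q} \<and> b \<in> {0..<int q} \<and> c \<in> {0..<int q}
              \<and> d \<in> {0..<int q} \<and> [a * d - b * c = 1] (mod int q)}"

definition d_entry :: "int \<times> int \<times> int \<times> int \<Rightarrow> int" where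
  "d_entry w = snd (snd (snd w))"

definition ramanujan_sum :: "nat \<Rightarrow> int \<Rightarrow> complex" where
  "ramanujan_sum q m = (\<Sum>a \<in> {a. a \<in> {1..q} \<and> coprime a q}.
        exp (2 * of_real pi * \<i> * of_nat a * of_int m / of_nat q))"

definition Cbar :: "nat \<Rightarrow> int \<Rightarrow> complex" where
  "Cbar q n = (1 / of_nat (card (SL2 q))) * (\<Sum>w \<in> SL2 q. ramanujan_sum q (d_entry w - n))"

end

theory Submission
  imports Defs
begin

(*
  Detect ad - bc = 1 (mod q) with the additive characters e_q(x) = exp(2 pi i x / q). A sum over
  SL_2(Z/qZ) of a function of d then factors through the frequency t: sum_{b,c} e_q(-tbc) = q gcd(t, q),
  while sum_{a,d} e_q(tad) c_q(d - n) vanishes unless t is a unit mod q, where it equals q c_q(-n).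
  Hence |SL_2(Z/qZ)| = q H(q) with H(q) = sum_t e_q(-t) gcd(t, q)^2, and Cbar_q(n) = c_q(-1) c_q(-n) / H(q).
  By the Chinese remainder theorem this is multiplicative in q; it vanishes at p^k for k >= 2 since
  c_{p^k}(-1) = 0, and 1 + Cbar_p(n) is the Euler factor p^2 / (p^2 - 1) of zeta(2), multiplied by
  (p - 1) / p when p divides n. This gives absolute convergence, and the series equals its Euler
  product, which tends to zeta(2) prod_{p | n} (p - 1) / p.
*)

section \<open>Additive characters and linear congruences\<close>

definition add_char :: "nat \<Rightarrow> int \<Rightarrow> complex" where
  "add_char q x = exp (2 * of_real pi * \<i> * of_int x / of_nat q)"

lemma add_char_0 [simp]: "add_char q 0 = 1"
  by (simp add: add_char_def)

lemma add_char_add: "add_char q (x + y) = add_char q x * add_char q y"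
  unfolding add_char_def by (simp add: distrib_left add_divide_distrib exp_add)

lemma add_char_mult_nat: "add_char q (int k * x) = add_char q x ^ k"
  unfolding add_char_def by (simp add: exp_of_nat_mult[symmetric] algebra_simps)

lemma add_char_scale: "k > 0 \<Longrightarrow> add_char (k * q) (x * int k) = add_char q x"
  unfolding add_char_def by (simp add: field_simps)

lemma add_char_multiple:
  assumes "q > 0"
  shows "add_char q (int q * k) = 1"
proof -
  have "2 * complex_of_real pi * \<i> * of_int (int q * k) / of_nat q = 2 * pi * of_int k * \<i>"
    using assms by (simp add: field_simps)
  then show ?thesis
    unfolding add_char_def by (simp add: exp_eq_1)
qed

lemma add_char_mod:
  assumes "q > 0"
  shows "add_char q (x mod int q) = add_char q x"
proof -
  have "add_char q x = add_char q (x mod int q + int q * (x div int q))"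
    by simp
  also have "\<dots> = add_char q (x mod int q)"
    using assms by (simp only: add_char_add add_char_multiple mult_1_right)
  finally show ?thesis ..
qed

lemma add_char_cong: "q > 0 \<Longrightarrow> [x = y] (mod int q) \<Longrightarrow> add_char q x = add_char q y"
  by (metis add_char_mod cong_def)

lemma add_char_eq_1_iff:
  assumes q: "q > 0"
  shows "add_char q x = 1 \<longleftrightarrow> int q dvd x"
proof
  assume "int q dvd x"
  then show "add_char q x = 1"
    using add_char_multiple[OF q] by auto
next
  assume "add_char q x = 1"
  define r where "r = nat (x mod int q)"
  have r: "int r = x mod int q" "r < q"
    using q by (simp_all add: r_def nat_less_iff)
  have "exp (2 * complex_of_real pi * \<i> * of_nat r / of_nat q) = 1"
    using \<open>add_char q x = 1\<close> add_char_mod[OF q, of x]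
    unfolding add_char_def r(1)[symmetric] by simp
  then have "q dvd r"
    using complex_root_unity_eq_1[of q r] q by simp
  then have "r = 0"
    using r(2) by (auto dest: dvd_imp_le)
  then show "int q dvd x"
    using r(1) by auto
qed

lemma sum_add_char:
  assumes q: "q > 0"
  shows "(\<Sum>t\<in>{0..<int q}. add_char q (t * x)) = (if int q dvd x then of_nat q else 0)"
proof -
  have "(\<Sum>t\<in>{0..<int q}. add_char q (t * x)) = (\<Sum>k<q. add_char q (int k * x))"
  proof -
    have "{0..<int q} = int ` {..<q}"
      by (simp add: image_int_atLeastLessThan atLeast0LessThan[symmetric])
    then show ?thesis
      by (simp add: sum.reindex)
  qed
  also have "\<dots> = (\<Sum>k<q. add_char q x ^ k)"
    by (simp add: add_char_mult_nat)
  finally have "(\<Sum>t\<in>{0..<int q}. add_char q (t * x)) = (\<Sum>k<q. add_char q x ^ k)" .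
  moreover have "add_char q x ^ q = 1"
    using add_char_mult_nat[of q q x] add_char_multiple[OF q] by simp
  ultimately show ?thesis
    using geometric_sum[of "add_char q x" q] add_char_eq_1_iff[OF q, of x] by auto
qed

lemma cong_indicator_eq_sum_add_char:
  assumes "q > 0"
  shows "(if [x = y] (mod int q) then of_nat q else 0) = (\<Sum>t\<in>{0..<int q}. add_char q (t * (x - y)))"
  using assms by (simp add: sum_add_char cong_iff_dvd_diff)

lemma multiples_atLeastLessThan:
  fixes d k :: int
  assumes "d > 0"
  shows "{b \<in> {0..<d * k}. d dvd b} = (\<lambda>j. d * j) ` {0..<k}"
proof (intro equalityI subsetI)
  fix b assume b: "b \<in> {b \<in> {0..<d * k}. d dvd b}"
  then obtain j where j: "b = d * j"
    by blast
  then have "j \<in> {0..<k}"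
    using b assms by (simp add: zero_le_mult_iff)
  then show "b \<in> (\<lambda>j. d * j) ` {0..<k}"
    using j by blast
next
  fix b assume "b \<in> (\<lambda>j. d * j) ` {0..<k}"
  then show "b \<in> {b \<in> {0..<d * k}. d dvd b}"
    using assms by auto
qed

lemma card_solutions_homogeneous_congruence:
  assumes q: "q > 0"
  shows "card {b \<in> {0..<int q}. int q dvd t * b} = nat (gcd t (int q))"
proof -
  define g where "g = gcd t (int q)"
  define q' where "q' = int q div g"
  define t' where "t' = t div g"
  have g: "g > 0" "int q = g * q'" "t = g * t'"
    using q by (simp_all add: g_def q'_def t'_def)
  then have q': "q' > 0"
    using q by (metis of_nat_0_less_iff zero_less_mult_pos)
  have "coprime t' q'"
    unfolding g_def q'_def t'_def using q by (intro div_gcd_coprime) simp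
  then have iff: "int q dvd t * b \<longleftrightarrow> q' dvd b" for b
  proof -
    have "int q dvd t * b \<longleftrightarrow> g * q' dvd g * (t' * b)"
      using g(2,3) by (simp add: mult.assoc)
    also have "\<dots> \<longleftrightarrow> q' dvd t' * b"
      using g(1) by simp
    also have "\<dots> \<longleftrightarrow> q' dvd b"
      using \<open>coprime t' q'\<close> by (simp add: coprime_commute coprime_dvd_mult_right_iff)
    finally show ?thesis .
  qed
  have "{b \<in> {0..<int q}. int q dvd t * b} = {b \<in> {0..<q' * g}. q' dvd b}"
    using iff g(2) by (simp add: mult.commute)
  also have "\<dots> = (\<lambda>j. q' * j) ` {0..<g}"
    by (rule multiples_atLeastLessThan[OF q'])
  finally show ?thesis
    using q' by (simp add: card_image inj_on_def g_def)
qed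

lemma card_solutions_linear_congruence:
  assumes q: "q > 0" and u: "coprime u (int q)"
  shows "card {a \<in> {0..<int q}. int q dvd t * a + u} = (if coprime t (int q) then 1 else 0)"
proof (cases "coprime t (int q)")
  case True
  then obtain x where "[t * x = 1] (mod int q)"
    using cong_solve_coprime_int by blast
  then have tx: "int q dvd t * x - 1"
    by (simp add: cong_iff_dvd_diff)
  have "int q dvd t * a + u \<longleftrightarrow> [a = - u * x] (mod int q)" for a
  proof -
    have "a - (- u * x) = x * (t * a + u) - a * (t * x - 1)" "t * a + u = t * (a - (- u * x)) - u * (t * x - 1)"
      by (simp_all add: algebra_simps)
    then show ?thesis
      using tx unfolding cong_iff_dvd_diff by (metis dvd_diff dvd_mult)
  qed
  moreover have "a \<in> {0..<int q} \<and> [a = c] (mod int q) \<longleftrightarrow> a = c mod int q" for a c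
    using q by (auto simp: cong_def)
  ultimately have "{a \<in> {0..<int q}. int q dvd t * a + u} = {(- u * x) mod int q}"
    by blast
  then show ?thesis
    using True by simp
next
  case False
  have "\<not> int q dvd t * a + u" for a
  proof
    assume "int q dvd t * a + u"
    then have "gcd t (int q) dvd t * a + u"
      using gcd_dvd2 dvd_trans by blast
    then have "gcd t (int q) dvd u"
      by (simp add: dvd_add_right_iff)
    then have "is_unit (gcd t (int q))"
      using u by (meson coprime_common_divisor gcd_dvd2)
    then show False
      using False by (simp add: coprime_iff_gcd_eq_1)
  qed
  then show ?thesis
    using False by simp
qed

lemma sum_add_char_affine:
  assumes q: "q > 0"
  shows "(\<Sum>a\<in>{0..<int q}. \<Sum>d\<in>{0..<int q}. add_char q (d * (t * a + u))) =
    of_nat q * of_nat (card {a \<in> {0..<int q}. int q dvd t * a + u})"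
  using q by (simp add: sum_add_char sum.If_cases Int_def)

lemma sum_add_char_bilinear:
  assumes q: "q > 0"
  shows "(\<Sum>a\<in>{0..<int q}. \<Sum>d\<in>{0..<int q}. add_char q (t * a * d)) = of_nat q * of_int (gcd t (int q))"
  using sum_add_char_affine[OF q, of t 0] card_solutions_homogeneous_congruence[OF q, of t]
  by (simp add: mult_ac)

section \<open>Ramanujan sums and sums over \<open>SL\<^sub>2(\<int>/q\<int>)\<close>\<close>

definition reduced_residues :: "nat \<Rightarrow> int set" where
  "reduced_residues q = {u \<in> {0..<int q}. coprime u (int q)}"

definition gcd_square_sum :: "nat \<Rightarrow> complex" where
  "gcd_square_sum q = (\<Sum>t\<in>{0..<int q}. add_char q (-t) * of_int (gcd t (int q)) ^ 2)"

lemma ramanujan_sum_eq_sum_reduced_residues: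
  assumes q: "q > 0"
  shows "ramanujan_sum q m = (\<Sum>u\<in>reduced_residues q. add_char q (u * m))"
  unfolding ramanujan_sum_def
proof (rule sum.reindex_bij_witness[where i = "\<lambda>u. if u = 0 then q else nat u" and j = "\<lambda>a. int a mod int q"])
  fix a assume a: "a \<in> {a. a \<in> {1..q} \<and> coprime a q}"
  then show "(if int a mod int q = 0 then q else nat (int a mod int q)) = a"
    by (cases "a = q") auto
  show "int a mod int q \<in> reduced_residues q"
    using a q by (simp add: reduced_residues_def)
  have "[int a mod int q * m = int a * m] (mod int q)"
    by (intro cong_mult cong_refl) (simp add: cong_def)
  then have "add_char q (int a mod int q * m) = add_char q (int a * m)"
    using q by (simp add: add_char_cong)
  then show "add_char q (int a mod int q * m) = exp (2 * complex_of_real pi * \<i> * of_nat a * of_int m / of_nat q)"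
    by (simp add: add_char_def mult.assoc)
next
  fix u assume "u \<in> reduced_residues q"
  then have u: "0 \<le> u" "u < int q" "coprime u (int q)"
    by (auto simp: reduced_residues_def)
  then show "int (if u = 0 then q else nat u) mod int q = u"
    by auto
  show "(if u = 0 then q else nat u) \<in> {a. a \<in> {1..q} \<and> coprime a q}"
  proof (cases "u = 0")
    case False
    then have "coprime (int (nat u)) (int q)"
      using u by simp
    moreover have "nat u \<in> {1..q}"
      using False u by auto
    ultimately show ?thesis
      using False u by (simp del: coprime_int_iff add: coprime_int_iff[symmetric])
  qed (use u q in simp)
qed

lemma SL2_eq_filter:
  "SL2 q = {w \<in> {0..<int q} \<times> {0..<int q} \<times> {0..<int q} \<times> {0..<int q}.
     case w of (a, b, c, d) \<Rightarrow> [a * d - b * c = 1] (mod int q)}"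
  unfolding SL2_def by auto

lemma sum_quadruple_product:
  fixes f :: "'a \<Rightarrow> 'd \<Rightarrow> 'r::comm_semiring_0" and g :: "'b \<Rightarrow> 'c \<Rightarrow> 'r"
  shows "(\<Sum>(a, b, c, d)\<in>A \<times> B \<times> C \<times> D. f a d * g b c) = (\<Sum>a\<in>A. \<Sum>d\<in>D. f a d) * (\<Sum>b\<in>B. \<Sum>c\<in>C. g b c)"
proof -
  have swap: "(\<Sum>b\<in>B. \<Sum>c\<in>C. \<Sum>d\<in>D. h b c d) = (\<Sum>d\<in>D. \<Sum>b\<in>B. \<Sum>c\<in>C. h b c d)" for h
    by (simp only: sum.swap[of _ C D] sum.swap[of _ B D])
  have "(\<Sum>(a, b, c, d)\<in>A \<times> B \<times> C \<times> D. f a d * g b c) = (\<Sum>a\<in>A. \<Sum>d\<in>D. \<Sum>b\<in>B. \<Sum>c\<in>C. f a d * g b c)"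
    by (simp add: sum.cartesian_product[symmetric] swap)
  also have "\<dots> = (\<Sum>a\<in>A. \<Sum>d\<in>D. f a d) * (\<Sum>b\<in>B. \<Sum>c\<in>C. g b c)"
    by (simp only: sum_distrib_right, simp only: sum_distrib_left)
  finally show ?thesis .
qed

lemma sum_SL2_eq_indicator_sum:
  fixes q :: nat and G :: "int \<Rightarrow> complex"
  defines "R \<equiv> {0..<int q}"
  shows "of_nat q * (\<Sum>w\<in>SL2 q. G (d_entry w)) =
    (\<Sum>(a, b, c, d)\<in>R \<times> R \<times> R \<times> R. (if [a*d - b*c = 1] (mod int q) then of_nat q else 0) * G d)"
proof -
  have "of_nat q * (\<Sum>w\<in>SL2 q. G (d_entry w)) = (\<Sum>w\<in>R \<times> R \<times> R \<times> R.
      if (case w of (a, b, c, d) \<Rightarrow> [a * d - b * c = 1] (mod int q)) then of_nat q * G (d_entry w) else 0)"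
    unfolding SL2_eq_filter R_def sum_distrib_left by (rule sum.inter_filter) simp
  also have "\<dots> = (\<Sum>(a, b, c, d)\<in>R \<times> R \<times> R \<times> R. (if [a*d - b*c = 1] (mod int q) then of_nat q else 0) * G d)"
    by (intro sum.cong refl) (auto simp: d_entry_def)
  finally show ?thesis .
qed

lemma sum_SL2_d_entry:
  fixes G :: "int \<Rightarrow> complex"
  assumes q: "q > 0"
  defines "R \<equiv> {0..<int q}"
  shows "(\<Sum>w\<in>SL2 q. G (d_entry w)) =
    (\<Sum>t\<in>R. add_char q (-t) * of_int (gcd t (int q)) * (\<Sum>a\<in>R. \<Sum>d\<in>R. add_char q (t*a*d) * G d))"
proof -
  have detect: "(if [a*d - b*c = 1] (mod int q) then of_nat q else 0) =
      (\<Sum>t\<in>R. add_char q (-t) * (add_char q (t*a*d) * add_char q (-(t*b*c))))" for a b c d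
  proof -
    have "add_char q (-t) * (add_char q (t*a*d) * add_char q (-(t*b*c))) = add_char q (t * (a*d - b*c - 1))" for t
      by (simp add: add_char_add[symmetric] algebra_simps)
    then show ?thesis
      unfolding R_def cong_indicator_eq_sum_add_char[OF q] by simp
  qed
  have "of_nat q * (\<Sum>w\<in>SL2 q. G (d_entry w)) =
      (\<Sum>(a, b, c, d)\<in>R \<times> R \<times> R \<times> R. (if [a*d - b*c = 1] (mod int q) then of_nat q else 0) * G d)"
    unfolding R_def by (rule sum_SL2_eq_indicator_sum)
  also have "\<dots> = (\<Sum>(a, b, c, d)\<in>R \<times> R \<times> R \<times> R. \<Sum>t\<in>R.
      add_char q (-t) * ((add_char q (t*a*d) * G d) * add_char q (-(t*b*c))))"
    by (simp only: detect sum_distrib_right) (simp add: mult_ac)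
  also have "\<dots> = (\<Sum>t\<in>R. add_char q (-t) *
      (\<Sum>(a, b, c, d)\<in>R \<times> R \<times> R \<times> R. (add_char q (t*a*d) * G d) * add_char q (-(t*b*c))))"
    by (simp only: sum_distrib_left case_prod_unfold) (rule sum.swap)
  also have "\<dots> = (\<Sum>t\<in>R. add_char q (-t) *
      ((\<Sum>a\<in>R. \<Sum>d\<in>R. add_char q (t*a*d) * G d) * (\<Sum>b\<in>R. \<Sum>c\<in>R. add_char q (-t * b * c))))"
    by (simp only: sum_quadruple_product mult_minus_left)
  also have "\<dots> = (\<Sum>t\<in>R. of_nat q * (add_char q (-t) * of_int (gcd t (int q)) *
      (\<Sum>a\<in>R. \<Sum>d\<in>R. add_char q (t*a*d) * G d)))"
  proof (intro sum.cong refl)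
    fix t
    have "(\<Sum>b\<in>R. \<Sum>c\<in>R. add_char q (-t * b * c)) = of_nat q * of_int (gcd t (int q))"
      using sum_add_char_bilinear[OF q, of "-t"] by (simp add: R_def)
    then show "add_char q (-t) * ((\<Sum>a\<in>R. \<Sum>d\<in>R. add_char q (t*a*d) * G d) *
        (\<Sum>b\<in>R. \<Sum>c\<in>R. add_char q (-t * b * c))) = of_nat q * (add_char q (-t) *
        of_int (gcd t (int q)) * (\<Sum>a\<in>R. \<Sum>d\<in>R. add_char q (t*a*d) * G d))"
      by (simp only: mult_ac)
  qed
  also have "\<dots> = of_nat q * (\<Sum>t\<in>R. add_char q (-t) * of_int (gcd t (int q)) *
      (\<Sum>a\<in>R. \<Sum>d\<in>R. add_char q (t*a*d) * G d))"
    by (rule sum_distrib_left[symmetric])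
  finally show ?thesis
    using q by simp
qed

lemma card_SL2:
  assumes q: "q > 0"
  shows "of_nat (card (SL2 q)) = of_nat q * gcd_square_sum q"
  using sum_SL2_d_entry[OF q, of "\<lambda>_. 1", unfolded mult_1_right sum_add_char_bilinear[OF q]]
  by (simp add: gcd_square_sum_def sum_distrib_left power2_eq_square mult_ac)

lemma sum_add_char_ramanujan_sum:
  assumes q: "q > 0"
  shows "(\<Sum>a\<in>{0..<int q}. \<Sum>d\<in>{0..<int q}. add_char q (t * a * d) * ramanujan_sum q (d - m)) =
    (if coprime t (int q) then of_nat q * ramanujan_sum q (-m) else 0)"
proof -
  define R where "R = {0..<int q}"
  have "add_char q (t * a * d) * add_char q (u * (d - m)) = add_char q (u * -m) * add_char q (d * (t * a + u))"
    for a d u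
    by (simp add: add_char_add[symmetric] algebra_simps)
  then have "(\<Sum>a\<in>R. \<Sum>d\<in>R. add_char q (t * a * d) * ramanujan_sum q (d - m)) =
      (\<Sum>a\<in>R. \<Sum>d\<in>R. \<Sum>u\<in>reduced_residues q. add_char q (u * -m) * add_char q (d * (t * a + u)))"
    by (simp add: ramanujan_sum_eq_sum_reduced_residues[OF q] sum_distrib_left)
  also have "\<dots> = (\<Sum>u\<in>reduced_residues q. add_char q (u * -m) * (\<Sum>a\<in>R. \<Sum>d\<in>R. add_char q (d * (t * a + u))))"
    by (simp add: sum_distrib_left sum.swap[where B = "reduced_residues q"])
  also have "\<dots> = (\<Sum>u\<in>reduced_residues q. add_char q (u * -m) *
      (of_nat q * (if coprime t (int q) then 1 else 0)))"
  proof (intro sum.cong refl)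
    fix u assume "u \<in> reduced_residues q"
    then have "coprime u (int q)"
      by (simp add: reduced_residues_def)
    then show "add_char q (u * -m) * (\<Sum>a\<in>R. \<Sum>d\<in>R. add_char q (d * (t * a + u))) =
        add_char q (u * -m) * (of_nat q * (if coprime t (int q) then 1 else 0))"
      unfolding R_def by (simp only: sum_add_char_affine[OF q] card_solutions_linear_congruence[OF q]) simp
  qed
  also have "\<dots> = (if coprime t (int q) then of_nat q * ramanujan_sum q (-m) else 0)"
    by (simp add: ramanujan_sum_eq_sum_reduced_residues[OF q] sum_distrib_left sum_distrib_right mult_ac)
  finally show ?thesis
    by (simp add: R_def)
qed

lemma sum_SL2_ramanujan_sum:
  assumes q: "q > 0"
  shows "(\<Sum>w\<in>SL2 q. ramanujan_sum q (d_entry w - m)) = of_nat q * ramanujan_sum q (-1) * ramanujan_sum q (-m)"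
proof -
  have "(\<Sum>w\<in>SL2 q. ramanujan_sum q (d_entry w - m)) = (\<Sum>t\<in>{0..<int q}.
      add_char q (-t) * of_int (gcd t (int q)) * (if coprime t (int q) then of_nat q * ramanujan_sum q (-m) else 0))"
    by (rule sum_SL2_d_entry[OF q, of "\<lambda>d. ramanujan_sum q (d - m)", unfolded sum_add_char_ramanujan_sum[OF q]])
  also have "\<dots> = (\<Sum>t\<in>{0..<int q}. if coprime t (int q) then add_char q (-t) * (of_nat q * ramanujan_sum q (-m)) else 0)"
    by (intro sum.cong refl) (simp add: coprime_iff_gcd_eq_1)
  also have "\<dots> = (\<Sum>t\<in>reduced_residues q. add_char q (-t)) * (of_nat q * ramanujan_sum q (-m))"
    unfolding reduced_residues_def sum_distrib_right by (rule sum.inter_filter[symmetric]) simp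
  also have "\<dots> = of_nat q * ramanujan_sum q (-1) * ramanujan_sum q (-m)"
    by (simp add: ramanujan_sum_eq_sum_reduced_residues[OF q] mult_ac)
  finally show ?thesis .
qed

lemma Cbar_eq_ramanujan_sums:
  assumes q: "q > 0"
  shows "Cbar q n = ramanujan_sum q (-1) * ramanujan_sum q (-n) / gcd_square_sum q"
  using q by (simp add: Cbar_def card_SL2 sum_SL2_ramanujan_sum)

section \<open>Multiplicativity\<close>

lemma gcd_mult_coprime_right:
  fixes a b c :: int
  assumes cop: "coprime b c"
  shows "gcd a (b * c) = gcd a b * gcd a c"
proof (rule zdvd_antisym_nonneg)
  have "coprime (gcd a b) (gcd a c)"
    using cop by (meson coprime_divisors gcd_dvd2)
  then have "gcd a b * gcd a c dvd a"
    by (simp add: divides_mult)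
  then show "gcd a b * gcd a c dvd gcd a (b * c)"
    by (simp add: mult_dvd_mono)
  (* g = h g' with h = gcd g b, where g' is coprime to b / h and hence divides c *)
  define g where "g = gcd a (b * c)"
  define h where "h = gcd g b"
  show "gcd a (b * c) dvd gcd a b * gcd a c"
  proof (cases "g = 0")
    case False
    then have "h \<noteq> 0"
      by (simp add: h_def)
    have g: "g = h * (g div h)" and b: "b = h * (b div h)"
      by (simp_all add: h_def)
    have "coprime (g div h) (b div h)"
      unfolding h_def using False by (intro div_gcd_coprime) simp
    moreover have "h * (g div h) dvd h * ((b div h) * c)"
      using g b by (metis g_def gcd_dvd2 mult.assoc)
    ultimately have "g div h dvd c"
      using \<open>h \<noteq> 0\<close> by (simp add: coprime_dvd_mult_right_iff)
    moreover have "g div h dvd a"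
      using g unfolding g_def by (metis dvd_mult_right gcd_dvd1)
    moreover have "h dvd gcd a b"
      unfolding h_def g_def by (meson dvd_trans gcd_dvd1 gcd_dvd2 gcd_greatest)
    ultimately have "h * (g div h) dvd gcd a b * gcd a c"
      by (simp add: mult_dvd_mono)
    then show ?thesis
      using g by (simp add: g_def)
  qed (simp add: g_def flip: abs_mult)
qed simp_all

definition crt_combine :: "nat \<Rightarrow> nat \<Rightarrow> int \<times> int \<Rightarrow> int" where
  "crt_combine q1 q2 = (\<lambda>(t1, t2). (t1 * int q2 + t2 * int q1) mod (int q1 * int q2))"

lemma crt_combine_cong:
  "[crt_combine q1 q2 (t1, t2) = t1 * int q2 + t2 * int q1] (mod int q1 * int q2)"
  by (simp add: crt_combine_def cong_def)

lemma crt_combine_cong_left: "[crt_combine q1 q2 (t1, t2) = t1 * int q2] (mod int q1)"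
proof -
  have "[crt_combine q1 q2 (t1, t2) = t1 * int q2 + t2 * int q1] (mod int q1)"
    using crt_combine_cong cong_modulus_mult by blast
  then show ?thesis
    by (simp add: cong_def)
qed

lemma crt_combine_cong_right: "[crt_combine q1 q2 (t1, t2) = t2 * int q1] (mod int q2)"
proof -
  have "[crt_combine q1 q2 (t1, t2) = t1 * int q2 + t2 * int q1] (mod int q2)"
    using crt_combine_cong cong_modulus_mult by (metis mult.commute)
  then show ?thesis
    by (simp add: cong_def)
qed

lemma bij_betw_crt_combine:
  assumes q1: "q1 > 0" and q2: "q2 > 0" and cop: "coprime q1 q2"
  shows "bij_betw (crt_combine q1 q2) ({0..<int q1} \<times> {0..<int q2}) {0..<int (q1 * q2)}"
proof -
  have inj: "inj_on (crt_combine q1 q2) ({0..<int q1} \<times> {0..<int q2})"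
  proof (rule inj_onI)
    fix x y
    assume "x \<in> {0..<int q1} \<times> {0..<int q2}" "y \<in> {0..<int q1} \<times> {0..<int q2}"
      and "crt_combine q1 q2 x = crt_combine q1 q2 y"
    moreover obtain x1 x2 y1 y2 where "x = (x1, x2)" "y = (y1, y2)"
      by fastforce
    ultimately have x: "(x1, x2) \<in> {0..<int q1} \<times> {0..<int q2}" and y: "(y1, y2) \<in> {0..<int q1} \<times> {0..<int q2}"
      and eq: "crt_combine q1 q2 (x1, x2) = crt_combine q1 q2 (y1, y2)"
      by simp_all
    have "[x1 * int q2 = y1 * int q2] (mod int q1)"
      using crt_combine_cong_left[of q1 q2 x1 x2] crt_combine_cong_left[of q1 q2 y1 y2] eq
      by (metis cong_sym cong_trans)
    then have "[x1 = y1] (mod int q1)"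
      using cop by (simp add: cong_mult_rcancel coprime_commute)
    moreover have "[x2 * int q1 = y2 * int q1] (mod int q2)"
      using crt_combine_cong_right[of q1 q2 x1 x2] crt_combine_cong_right[of q1 q2 y1 y2] eq
      by (metis cong_sym cong_trans)
    then have "[x2 = y2] (mod int q2)"
      using cop by (simp add: cong_mult_rcancel)
    ultimately show "x = y"
      using x y \<open>x = (x1, x2)\<close> \<open>y = (y1, y2)\<close> by (simp add: cong_def)
  qed
  have "crt_combine q1 q2 ` ({0..<int q1} \<times> {0..<int q2}) \<subseteq> {0..<int (q1 * q2)}"
    using q1 q2 by (auto simp: crt_combine_def)
  moreover have "card (crt_combine q1 q2 ` ({0..<int q1} \<times> {0..<int q2})) = card {0..<int (q1 * q2)}"
    using card_image[OF inj] by (simp add: card_cartesian_product flip: of_nat_mult)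
  ultimately show ?thesis
    using inj by (simp add: bij_betw_def card_subset_eq)
qed

lemma sum_crt_combine:
  assumes "q1 > 0" "q2 > 0" "coprime q1 q2"
  shows "(\<Sum>t\<in>{0..<int (q1 * q2)}. h t) =
    (\<Sum>t1\<in>{0..<int q1}. \<Sum>t2\<in>{0..<int q2}. h (crt_combine q1 q2 (t1, t2)))"
  using sum.reindex_bij_betw[OF bij_betw_crt_combine[OF assms], of h]
  by (simp add: sum.cartesian_product)

lemma add_char_crt_combine:
  assumes q1: "q1 > 0" and q2: "q2 > 0"
  shows "add_char (q1 * q2) (crt_combine q1 q2 (t1, t2) * m) = add_char q1 (t1 * m) * add_char q2 (t2 * m)"
proof -
  have "[crt_combine q1 q2 (t1, t2) * m = (t1 * int q2 + t2 * int q1) * m] (mod int q1 * int q2)"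
    by (rule cong_mult[OF crt_combine_cong cong_refl])
  moreover have "(t1 * int q2 + t2 * int q1) * m = (t1 * m) * int q2 + (t2 * m) * int q1"
    by (simp add: algebra_simps)
  ultimately have "[crt_combine q1 q2 (t1, t2) * m = (t1 * m) * int q2 + (t2 * m) * int q1] (mod int (q1 * q2))"
    by simp
  then have "add_char (q1 * q2) (crt_combine q1 q2 (t1, t2) * m) =
      add_char (q1 * q2) ((t1 * m) * int q2) * add_char (q1 * q2) ((t2 * m) * int q1)"
    using q1 q2 by (simp add: add_char_cong add_char_add)
  then show ?thesis
    using add_char_scale[OF q2, of q1 "t1 * m"] add_char_scale[OF q1, of q2 "t2 * m"]
    by (simp add: mult.commute)
qed

lemma gcd_crt_combine:
  assumes "coprime q1 q2"
  shows "gcd (crt_combine q1 q2 (t1, t2)) (int (q1 * q2)) = gcd t1 (int q1) * gcd t2 (int q2)"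
proof -
  have cop: "coprime (int q1) (int q2)"
    using assms by simp
  have "gcd (crt_combine q1 q2 (t1, t2)) (int q1) = gcd t1 (int q1)"
    using cong_gcd_eq[OF crt_combine_cong_left] cop
    by (simp add: coprime_commute gcd_mult_left_right_cancel)
  moreover have "gcd (crt_combine q1 q2 (t1, t2)) (int q2) = gcd t2 (int q2)"
    using cong_gcd_eq[OF crt_combine_cong_right] gcd_mult_left_right_cancel[of "int q2" "int q1" t2] cop
    by (simp add: coprime_commute)
  ultimately show ?thesis
    using gcd_mult_coprime_right[OF cop] by simp
qed

lemma coprime_crt_combine_iff:
  assumes "coprime q1 q2"
  shows "coprime (crt_combine q1 q2 (t1, t2)) (int (q1 * q2)) \<longleftrightarrow> coprime t1 (int q1) \<and> coprime t2 (int q2)"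
proof -
  have "a * b = 1 \<longleftrightarrow> a = 1 \<and> b = 1" if "0 \<le> a" "0 \<le> b" for a b :: int
    using that by (cases "a = 0") (auto simp: pos_zmult_eq_1_iff)
  then show ?thesis
    using gcd_crt_combine[OF assms] by (simp add: coprime_iff_gcd_eq_1)
qed

lemma ramanujan_sum_eq_sum_if:
  assumes "q > 0"
  shows "ramanujan_sum q m = (\<Sum>t\<in>{0..<int q}. if coprime t (int q) then add_char q (t * m) else 0)"
  unfolding ramanujan_sum_eq_sum_reduced_residues[OF assms] reduced_residues_def
  by (rule sum.inter_filter) simp

lemma ramanujan_sum_mult:
  assumes q1: "q1 > 0" and q2: "q2 > 0" and cop: "coprime q1 q2"
  shows "ramanujan_sum (q1 * q2) m = ramanujan_sum q1 m * ramanujan_sum q2 m"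
proof -
  have "ramanujan_sum (q1 * q2) m =
      (\<Sum>t\<in>{0..<int (q1 * q2)}. if coprime t (int (q1 * q2)) then add_char (q1 * q2) (t * m) else 0)"
    using q1 q2 by (simp only: ramanujan_sum_eq_sum_if nat_0_less_mult_iff)
  also have "\<dots> = (\<Sum>t1\<in>{0..<int q1}. \<Sum>t2\<in>{0..<int q2}.
      (if coprime t1 (int q1) then add_char q1 (t1 * m) else 0) * (if coprime t2 (int q2) then add_char q2 (t2 * m) else 0))"
    unfolding sum_crt_combine[OF assms] coprime_crt_combine_iff[OF cop] add_char_crt_combine[OF q1 q2]
    by (intro sum.cong refl) simp
  also have "\<dots> = ramanujan_sum q1 m * ramanujan_sum q2 m"
    by (simp only: ramanujan_sum_eq_sum_if[OF q1] ramanujan_sum_eq_sum_if[OF q2] sum_product)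
  finally show ?thesis .
qed

lemma gcd_square_sum_mult:
  assumes q1: "q1 > 0" and q2: "q2 > 0" and cop: "coprime q1 q2"
  shows "gcd_square_sum (q1 * q2) = gcd_square_sum q1 * gcd_square_sum q2"
  unfolding gcd_square_sum_def sum_crt_combine[OF assms] sum_product
proof (intro sum.cong refl)
  fix t1 t2
  show "add_char (q1 * q2) (- crt_combine q1 q2 (t1, t2)) * of_int (gcd (crt_combine q1 q2 (t1, t2)) (int (q1 * q2))) ^ 2 =
      add_char q1 (- t1) * of_int (gcd t1 (int q1)) ^ 2 * (add_char q2 (- t2) * of_int (gcd t2 (int q2)) ^ 2)"
    using add_char_crt_combine[OF q1 q2, of t1 t2 "-1"]
    by (simp only: gcd_crt_combine[OF cop]) (simp add: power_mult_distrib mult_ac)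
qed

lemma Cbar_mult:
  assumes "q1 > 0" "q2 > 0" "coprime q1 q2"
  shows "Cbar (q1 * q2) n = Cbar q1 n * Cbar q2 n"
  using assms by (simp add: Cbar_eq_ramanujan_sums ramanujan_sum_mult gcd_square_sum_mult)

lemma Cbar_1: "Cbar 1 n = 1"
proof -
  have "reduced_residues 1 = {0}" "{0..<1::int} = {0}"
    by (auto simp: reduced_residues_def)
  then show ?thesis
    by (simp add: Cbar_eq_ramanujan_sums ramanujan_sum_eq_sum_reduced_residues gcd_square_sum_def)
qed

section \<open>Prime powers\<close>

lemma coprime_prime_right_iff:
  fixes p t :: int
  assumes "prime p"
  shows "coprime t p \<longleftrightarrow> \<not> p dvd t"
proof (intro iffI notI)
  assume "coprime t p" "p dvd t"
  then have "is_unit p"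
    using coprime_common_divisor[of t p p] by simp
  then show False
    using assms by (simp add: not_prime_unit)
next
  assume "\<not> p dvd t"
  then show "coprime t p"
    using prime_imp_coprime[OF assms] coprime_commute by blast
qed

lemma ramanujan_sum_prime_power:
  assumes p: "prime p" and k: "k > 0"
  shows "ramanujan_sum (p ^ k) m = (if int (p ^ k) dvd m then of_nat (p ^ k) else 0)
                                   - (if int (p ^ (k - 1)) dvd m then of_nat (p ^ (k - 1)) else 0)"
proof -
  define r where "r = p ^ (k - 1)"
  define R where "R = {0..<int (p ^ k)}"
  have pk: "p ^ k = p * r"
    unfolding r_def using k by (cases k) auto
  have p0: "p > 0" and r0: "r > 0" and q0: "p ^ k > 0"
    using p by (simp_all add: r_def prime_gt_0_nat)
  have units: "reduced_residues (p ^ k) = R - {t \<in> R. int p dvd t}"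
    unfolding reduced_residues_def R_def using k p
    by (auto simp: coprime_power_right_iff coprime_prime_right_iff)
  have multiples: "{t \<in> R. int p dvd t} = (\<lambda>j. int p * j) ` {0..<int r}"
    unfolding R_def pk of_nat_mult by (rule multiples_atLeastLessThan) (use p0 in simp)
  have "ramanujan_sum (p ^ k) m = (\<Sum>t\<in>R. add_char (p ^ k) (t * m)) - (\<Sum>t\<in>{t \<in> R. int p dvd t}. add_char (p ^ k) (t * m))"
    unfolding ramanujan_sum_eq_sum_reduced_residues[OF q0] units by (rule sum_diff) (auto simp: R_def)
  also have "(\<Sum>t\<in>{t \<in> R. int p dvd t}. add_char (p ^ k) (t * m)) = (\<Sum>j\<in>{0..<int r}. add_char (p ^ k) (j * int p * m))"
    unfolding multiples using p0 by (subst sum.reindex) (auto simp: inj_on_def mult_ac)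
  also have "\<dots> = (\<Sum>j\<in>{0..<int r}. add_char r (j * m))"
  proof (intro sum.cong refl)
    fix j
    have "j * int p * m = (j * m) * int p"
      by (simp add: mult_ac)
    then show "add_char (p ^ k) (j * int p * m) = add_char r (j * m)"
      by (simp only: pk add_char_scale[OF p0])
  qed
  finally show ?thesis
    using sum_add_char[OF q0] sum_add_char[OF r0] by (simp add: R_def r_def)
qed

lemma ramanujan_sum_prime:
  assumes "prime p"
  shows "ramanujan_sum p m = (if int p dvd m then of_nat p else 0) - 1"
  using ramanujan_sum_prime_power[OF assms, of 1] by simp

lemma ramanujan_sum_prime_power_minus_one:
  assumes p: "prime p" and k: "k \<ge> 2"
  shows "ramanujan_sum (p ^ k) (-1) = 0"
proof -
  have "\<not> int (p ^ (k - 1)) dvd -1" "\<not> int (p ^ k) dvd -1"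
    using k prime_gt_1_nat[OF p] by (simp_all del: of_nat_power add: power_eq_1_iff)
  then show ?thesis
    using ramanujan_sum_prime_power[OF p, of k] k by simp
qed

lemma gcd_square_sum_prime:
  assumes p: "prime p"
  shows "gcd_square_sum p = of_nat p ^ 2 - 1"
proof -
  have p0: "p > 0"
    using p prime_gt_0_nat by blast
  have "gcd t (int p) = 1" if "t \<in> {1..<int p}" for t
  proof -
    have "\<not> int p dvd t"
      using that by (auto simp: zdvd_not_zless)
    then show ?thesis
      using coprime_prime_right_iff[of "int p" t] p by (simp add: coprime_iff_gcd_eq_1)
  qed
  moreover have split: "{0..<int p} = insert 0 {1..<int p}"
    using p0 by auto
  ultimately have "gcd_square_sum p = of_nat p ^ 2 + (\<Sum>t\<in>{1..<int p}. add_char p (-t))"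
    unfolding gcd_square_sum_def by simp
  moreover have "1 + (\<Sum>t\<in>{1..<int p}. add_char p (-t)) = 0"
    using sum_add_char[OF p0, of "-1"] prime_gt_1_nat[OF p] unfolding split by simp
  ultimately show ?thesis
    by (simp add: algebra_simps eq_neg_iff_add_eq_0)
qed

lemma Cbar_prime:
  assumes p: "prime p"
  shows "Cbar p n = of_real (if int p dvd n then - 1 / (real p + 1) else 1 / ((real p)\<^sup>2 - 1))"
proof -
  have p1: "real p > 1"
    using prime_gt_1_nat[OF p] by simp
  have "\<not> int p dvd -1"
    using p1 by auto
  then have "Cbar p n = of_real (- ((if int p dvd n then real p else 0) - 1) / ((real p)\<^sup>2 - 1))"
    using p by (simp add: Cbar_eq_ramanujan_sums ramanujan_sum_prime gcd_square_sum_prime prime_gt_0_nat)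
  also have "- ((if int p dvd n then real p else 0) - 1) / ((real p)\<^sup>2 - 1) =
      (if int p dvd n then - 1 / (real p + 1) else 1 / ((real p)\<^sup>2 - 1))"
  proof -
    have "real p * real p > 1 * 1"
      using p1 by (intro mult_strict_mono) auto
    then have "real p * real p - 1 \<noteq> 0" "real p + 1 \<noteq> 0"
      by simp_all
    then show ?thesis
      by (auto simp: field_simps power2_eq_square)
  qed
  finally show ?thesis .
qed

lemma Cbar_prime_power:
  assumes "prime p" "k \<ge> 2"
  shows "Cbar (p ^ k) n = 0"
  using assms by (simp add: Cbar_eq_ramanujan_sums ramanujan_sum_prime_power_minus_one prime_gt_0_nat)

section \<open>Euler products of multiplicative functions\<close>

definition multiplicative_function :: "(nat \<Rightarrow> 'a :: comm_semiring_1) \<Rightarrow> bool" where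
  "multiplicative_function f \<longleftrightarrow> f 1 = 1 \<and> (\<forall>a b. a > 0 \<longrightarrow> b > 0 \<longrightarrow> coprime a b \<longrightarrow> f (a * b) = f a * f b)"

definition smooth_numbers :: "nat \<Rightarrow> nat set \<Rightarrow> nat set" where
  "smooth_numbers K P = {m. m > 0 \<and> (\<forall>p. prime p \<and> p dvd m \<longrightarrow> p \<in> P) \<and> (\<forall>p\<in>P. multiplicity p m < K)}"

lemma smooth_numbers_empty: "smooth_numbers K {} = {1}"
  using prime_factor_nat by (auto simp: smooth_numbers_def)

lemma not_dvd_smooth_numbers: "m \<in> smooth_numbers K P \<Longrightarrow> prime p \<Longrightarrow> p \<notin> P \<Longrightarrow> \<not> p dvd m"
  by (auto simp: smooth_numbers_def)

lemma smooth_numbers_insert_decompose: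
  assumes n: "n \<in> smooth_numbers K (insert p0 P)" and p0: "prime p0"
  shows "multiplicity p0 n < K" "n div p0 ^ multiplicity p0 n \<in> smooth_numbers K P"
proof -
  define m where "m = n div p0 ^ multiplicity p0 n"
  have n0: "n > 0"
    using n by (simp add: smooth_numbers_def)
  have "\<not> p0 dvd m"
    unfolding m_def using n0 p0 by (intro multiplicity_decompose) auto
  have "n = p0 ^ multiplicity p0 n * m"
    by (simp add: m_def multiplicity_dvd)
  then have "m dvd n" "m > 0"
    using n0 by (metis dvd_triv_right, metis gr0I mult_0_right)
  have "q \<in> P" if "prime q" "q dvd m" for q
  proof -
    have "q \<in> insert p0 P"
      using n that dvd_trans[OF that(2) \<open>m dvd n\<close>] by (simp add: smooth_numbers_def)
    then show ?thesis
      using that(2) \<open>\<not> p0 dvd m\<close> by auto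
  qed
  moreover have "multiplicity p m < K" if "p \<in> P" for p
  proof -
    have "multiplicity p m \<le> multiplicity p n"
      using \<open>m dvd n\<close> n0 by (intro dvd_imp_multiplicity_le) auto
    moreover have "multiplicity p n < K"
      using n that by (simp add: smooth_numbers_def)
    ultimately show ?thesis
      by linarith
  qed
  ultimately show "m \<in> smooth_numbers K P"
    using \<open>m > 0\<close> by (simp add: smooth_numbers_def)
  show "multiplicity p0 n < K"
    using n by (simp add: smooth_numbers_def)
qed

lemma prime_power_mult_smooth_numbers:
  assumes p0: "prime p0" "p0 \<notin> P" and P: "\<forall>p\<in>P. prime p"
    and k: "k < K" and m: "m \<in> smooth_numbers K P"
  shows "p0 ^ k * m \<in> smooth_numbers K (insert p0 P)"
proof -
  have m0: "m > 0" and nd: "\<not> p0 dvd m"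
    using m not_dvd_smooth_numbers[OF m p0] by (simp_all add: smooth_numbers_def)
  have "q \<in> insert p0 P" if "prime q" "q dvd p0 ^ k * m" for q
  proof -
    have "q dvd p0 ^ k \<or> q dvd m"
      using that prime_dvd_mult_iff by blast
    then show ?thesis
    proof
      assume "q dvd p0 ^ k"
      then have "q dvd p0"
        using that(1) prime_dvd_power by blast
      then show ?thesis
        using that(1) p0(1) primes_dvd_imp_eq by blast
    next
      assume "q dvd m"
      then show ?thesis
        using m that(1) by (simp add: smooth_numbers_def)
    qed
  qed
  moreover have "multiplicity p (p0 ^ k * m) < K" if "p \<in> insert p0 P" for p
  proof -
    have "prime p"
      using that p0 P by auto
    then have "multiplicity p (p0 ^ k * m) = multiplicity p (p0 ^ k) + multiplicity p m"
      using m0 p0 by (simp add: prime_elem_multiplicity_mult_distrib)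
    then show ?thesis
      using that k m nd \<open>prime p\<close> p0
      by (cases "p = p0")
        (auto simp: smooth_numbers_def not_dvd_imp_multiplicity_0 multiplicity_distinct_prime_power)
  qed
  ultimately show ?thesis
    using m0 p0 by (simp add: smooth_numbers_def prime_gt_0_nat)
qed

lemma smooth_numbers_insert:
  assumes p0: "prime p0" "p0 \<notin> P" and P: "\<forall>p\<in>P. prime p"
  shows "smooth_numbers K (insert p0 P) = (\<lambda>(k, m). p0 ^ k * m) ` ({..<K} \<times> smooth_numbers K P)"
proof (intro equalityI subsetI)
  fix n assume n: "n \<in> smooth_numbers K (insert p0 P)"
  have "n = p0 ^ multiplicity p0 n * (n div p0 ^ multiplicity p0 n)"
    by (simp add: multiplicity_dvd)
  then show "n \<in> (\<lambda>(k, m). p0 ^ k * m) ` ({..<K} \<times> smooth_numbers K P)"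
    using smooth_numbers_insert_decompose[OF n p0(1)] by force
qed (auto intro: prime_power_mult_smooth_numbers[OF p0 P])

lemma inj_on_smooth_numbers_insert:
  assumes p0: "prime p0" "p0 \<notin> P"
  shows "inj_on (\<lambda>(k, m). p0 ^ k * m) ({..<K} \<times> smooth_numbers K P)"
proof (intro inj_onI, clarify)
  fix k m k' m'
  assume m: "m \<in> smooth_numbers K P" "m' \<in> smooth_numbers K P" and eq: "p0 ^ k * m = p0 ^ k' * m'"
  have "multiplicity p0 (p0 ^ k * m) = k" "multiplicity p0 (p0 ^ k' * m') = k'"
    using not_dvd_smooth_numbers[OF m(1) p0] not_dvd_smooth_numbers[OF m(2) p0] p0
    by (auto intro!: multiplicity_decomposeI simp: prime_gt_0_nat)
  then show "k = k' \<and> m = m'"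
    using eq p0 by auto
qed

lemma finite_smooth_numbers:
  assumes "finite P" "\<forall>p\<in>P. prime p"
  shows "finite (smooth_numbers K P)"
  using assms by (induction P rule: finite_induct) (simp_all add: smooth_numbers_empty smooth_numbers_insert)

lemma prod_sum_prime_powers_eq_sum_smooth_numbers:
  fixes f :: "nat \<Rightarrow> 'a :: comm_semiring_1"
  assumes f: "multiplicative_function f" and "finite P" "\<forall>p\<in>P. prime p"
  shows "(\<Prod>p\<in>P. \<Sum>k<K. f (p ^ k)) = (\<Sum>m\<in>smooth_numbers K P. f m)"
  using assms(2,3)
proof (induction P rule: finite_induct)
  case empty
  then show ?case
    using f by (simp add: smooth_numbers_empty multiplicative_function_def)
next
  case (insert p0 P)
  have p0: "prime p0" and P: "\<forall>p\<in>P. prime p"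
    using insert.prems by simp_all
  have "f (p0 ^ k) * f m = f (p0 ^ k * m)" if "m \<in> smooth_numbers K P" for k m
  proof -
    have "coprime (p0 ^ k) m"
      using not_dvd_smooth_numbers[OF that p0 insert.hyps(2)] p0
      by (simp add: coprime_power_left_iff prime_imp_coprime)
    then show ?thesis
      using f that p0 by (simp add: multiplicative_function_def smooth_numbers_def prime_gt_0_nat)
  qed
  then have "(\<Sum>k<K. f (p0 ^ k)) * (\<Sum>m\<in>smooth_numbers K P. f m) =
      (\<Sum>(k, m)\<in>{..<K} \<times> smooth_numbers K P. f (p0 ^ k * m))"
    by (simp add: sum_product sum.cartesian_product)
  also have "\<dots> = (\<Sum>m\<in>smooth_numbers K (insert p0 P). f m)"
    using sum.reindex[OF inj_on_smooth_numbers_insert[OF p0 insert.hyps(2)], of f]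
    by (simp add: smooth_numbers_insert[OF p0 insert.hyps(2) P] case_prod_unfold)
  finally show ?case
    using insert by simp
qed

lemma atLeastAtMost_subset_smooth_numbers: "{1..N} \<subseteq> smooth_numbers (Suc N) {p. prime p \<and> p \<le> N}"
proof
  fix m assume m: "m \<in> {1..N}"
  have "p \<le> N" if "p dvd m" for p
    using m that by (auto dest: dvd_imp_le)
  moreover have "multiplicity p m < Suc N" if "prime p" for p
  proof -
    have "p ^ multiplicity p m \<le> m"
      using m by (intro dvd_imp_le multiplicity_dvd) auto
    moreover have "multiplicity p m < 2 ^ multiplicity p m"
      by (rule less_exp)
    moreover have "(2::nat) ^ multiplicity p m \<le> p ^ multiplicity p m"
      using prime_ge_2_nat[OF that] by (rule power_mono) simp
    ultimately have "multiplicity p m < m"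
      by linarith
    then show ?thesis
      using m by simp
  qed
  ultimately show "m \<in> smooth_numbers (Suc N) {p. prime p \<and> p \<le> N}"
    using m by (simp add: smooth_numbers_def)
qed

lemma finite_primes_le: "finite {p :: nat. prime p \<and> p \<le> N}"
  by (rule finite_subset[of _ "{..N}"]) auto

lemma sum_le_suminf_tail:
  fixes g :: "nat \<Rightarrow> real"
  assumes g: "summable (\<lambda>j. g (Suc (j + N)))" "\<And>m. g m \<ge> 0"
    and E: "finite E" "\<And>m. m \<in> E \<Longrightarrow> m > N"
  shows "(\<Sum>m\<in>E. g m) \<le> (\<Sum>j. g (Suc (j + N)))"
proof -
  define E' where "E' = (\<lambda>j. Suc (j + N)) -` E"
  have inj: "inj (\<lambda>j. Suc (j + N))"
    by (simp add: inj_def)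
  have "E = (\<lambda>j. Suc (j + N)) ` E'"
  proof (intro equalityI subsetI)
    fix m assume "m \<in> E"
    then have "m = Suc ((m - Suc N) + N)" "m - Suc N \<in> E'"
      using E(2)[of m] by (auto simp: E'_def)
    then show "m \<in> (\<lambda>j. Suc (j + N)) ` E'"
      by blast
  qed (auto simp: E'_def)
  moreover have "finite E'"
    unfolding E'_def using E(1) inj by (simp add: finite_vimageI)
  ultimately show ?thesis
    using g by (simp add: sum.reindex inj_on_def sum_le_suminf)
qed

lemma summable_multiplicative_function_bounded:
  fixes g :: "nat \<Rightarrow> real"
  assumes g: "multiplicative_function g" "\<And>m. g m \<ge> 0"
    and bound: "\<And>N. (\<Prod>p | prime p \<and> p \<le> N. \<Sum>k\<le>N. g (p ^ k)) \<le> B"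
  shows "summable (\<lambda>m. g (Suc m))"
proof (rule summableI_nonneg_bounded)
  fix N :: nat
  define P where "P = {p. prime p \<and> p \<le> N}"
  have P: "finite P" "\<forall>p\<in>P. prime p"
    using finite_primes_le[of N] by (simp_all add: P_def)
  have "(\<Sum>j<N. g (Suc j)) = (\<Sum>m\<in>{1..N}. g m)"
    using sum.atLeast1_atMost_eq[of g N] by simp
  also have "\<dots> \<le> (\<Sum>m\<in>smooth_numbers (Suc N) P. g m)"
    using atLeastAtMost_subset_smooth_numbers[of N] finite_smooth_numbers[OF P] g(2)
    unfolding P_def by (intro sum_mono2) (auto simp: finite_primes_le)
  also have "\<dots> = (\<Prod>p\<in>P. \<Sum>k\<le>N. g (p ^ k))"
    using prod_sum_prime_powers_eq_sum_smooth_numbers[OF g(1) P, of "Suc N"] by (simp add: lessThan_Suc_atMost)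
  also have "\<dots> \<le> B"
    using bound by (simp add: P_def)
  finally show "(\<Sum>j<N. g (Suc j)) \<le> B" .
qed (use g in simp)

(* The truncated Euler product is the sum of f over D = smooth_numbers (Suc N) {primes <= N}, which
   contains 1..N and otherwise only numbers above N; so both error terms are bounded by the tail. *)
lemma norm_euler_product_minus_suminf_le:
  fixes f :: "nat \<Rightarrow> 'a :: {banach, real_normed_algebra_1, comm_ring_1}"
  assumes f: "multiplicative_function f" and summable: "summable (\<lambda>m. norm (f (Suc m)))"
  shows "norm ((\<Prod>p | prime p \<and> p \<le> N. \<Sum>k\<le>N. f (p ^ k)) - (\<Sum>m. f (Suc m))) \<le>
    2 * (\<Sum>j. norm (f (Suc (j + N))))"
proof -
  define D where "D = smooth_numbers (Suc N) {p. prime p \<and> p \<le> N}"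
  have tail_summable: "summable (\<lambda>j. norm (f (Suc (j + N))))"
    using summable_ignore_initial_segment[OF summable, of N] by simp
  have "finite D"
    unfolding D_def by (rule finite_smooth_numbers[OF finite_primes_le]) simp
  have "{1..N} \<subseteq> D"
    unfolding D_def by (rule atLeastAtMost_subset_smooth_numbers)
  have D_large: "m > N" if "m \<in> D - {1..N}" for m
    using that by (auto simp: D_def smooth_numbers_def)
  have "(\<Prod>p | prime p \<and> p \<le> N. \<Sum>k\<le>N. f (p ^ k)) = (\<Sum>m\<in>D. f m)"
    using prod_sum_prime_powers_eq_sum_smooth_numbers[OF f finite_primes_le, of N "Suc N"]
    by (simp add: D_def lessThan_Suc_atMost)
  also have "\<dots> = (\<Sum>m\<in>D - {1..N}. f m) + (\<Sum>m\<in>{1..N}. f m)"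
    by (rule sum.subset_diff[OF \<open>{1..N} \<subseteq> D\<close> \<open>finite D\<close>])
  finally have "(\<Prod>p | prime p \<and> p \<le> N. \<Sum>k\<le>N. f (p ^ k)) = (\<Sum>m\<in>D - {1..N}. f m) + (\<Sum>m\<in>{1..N}. f m)" .
  moreover have "(\<Sum>m. f (Suc m)) = (\<Sum>j. f (Suc (j + N))) + (\<Sum>m\<in>{1..N}. f m)"
    using suminf_split_initial_segment[OF summable_norm_cancel[OF summable], of N]
    using sum.atLeast1_atMost_eq[of f N] by simp
  ultimately have "norm ((\<Prod>p | prime p \<and> p \<le> N. \<Sum>k\<le>N. f (p ^ k)) - (\<Sum>m. f (Suc m))) =
      norm ((\<Sum>m\<in>D - {1..N}. f m) - (\<Sum>j. f (Suc (j + N))))"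
    by simp
  also have "\<dots> \<le> (\<Sum>m\<in>D - {1..N}. norm (f m)) + (\<Sum>j. norm (f (Suc (j + N))))"
    using tail_summable by (intro norm_triangle_le_diff add_mono norm_sum summable_norm)
  also have "(\<Sum>m\<in>D - {1..N}. norm (f m)) \<le> (\<Sum>j. norm (f (Suc (j + N))))"
    using \<open>finite D\<close> D_large by (intro sum_le_suminf_tail tail_summable) auto
  finally show ?thesis
    by simp
qed

lemma euler_product_tendsto:
  fixes f :: "nat \<Rightarrow> 'a :: {banach, real_normed_algebra_1, comm_ring_1}"
  assumes f: "multiplicative_function f" and summable: "summable (\<lambda>m. norm (f (Suc m)))"
  shows "(\<lambda>N. \<Prod>p | prime p \<and> p \<le> N. \<Sum>k\<le>N. f (p ^ k)) \<longlonglongrightarrow> (\<Sum>m. f (Suc m))"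
proof -
  define T where "T N = (\<Sum>j. norm (f (Suc (j + N))))" for N
  have "T = (\<lambda>N. (\<Sum>m. norm (f (Suc m))) - (\<Sum>i<N. norm (f (Suc i))))"
    using suminf_split_initial_segment[OF summable] by (simp add: T_def fun_eq_iff eq_diff_eq)
  moreover have "(\<lambda>N. (\<Sum>m. norm (f (Suc m))) - (\<Sum>i<N. norm (f (Suc i)))) \<longlonglongrightarrow>
      (\<Sum>m. norm (f (Suc m))) - (\<Sum>m. norm (f (Suc m)))"
    by (intro tendsto_diff tendsto_const summable_LIMSEQ summable)
  ultimately have "T \<longlonglongrightarrow> 0"
    by simp
  then have "(\<lambda>N. 2 * T N) \<longlonglongrightarrow> 0"
    by (rule tendsto_mult_right_zero)
  have "\<forall>N. norm ((\<Prod>p | prime p \<and> p \<le> N. \<Sum>k\<le>N. f (p ^ k)) - (\<Sum>m. f (Suc m))) \<le> 2 * T N"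
    unfolding T_def using norm_euler_product_minus_suminf_le[OF f summable] by blast
  then have "(\<lambda>N. (\<Prod>p | prime p \<and> p \<le> N. \<Sum>k\<le>N. f (p ^ k)) - (\<Sum>m. f (Suc m))) \<longlonglongrightarrow> 0"
    using \<open>(\<lambda>N. 2 * T N) \<longlonglongrightarrow> 0\<close> by (rule Lim_null_comparison[OF always_eventually])
  then show ?thesis
    by (rule LIM_zero_cancel)
qed

section \<open>The Euler product of \<open>\<zeta>(2)\<close>\<close>

lemma geometric_sums_inverse_square:
  fixes x :: real
  assumes "x > 1"
  shows "(\<lambda>k. (1 / x\<^sup>2) ^ k) sums (x\<^sup>2 / (x\<^sup>2 - 1))"
proof -
  have "x\<^sup>2 > 1"
    using assms by (simp add: one_less_power)
  then have "norm (1 / x\<^sup>2) < 1"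
    by (simp add: divide_less_eq_1)
  moreover have "x\<^sup>2 / (x\<^sup>2 - 1) = 1 / (1 - 1 / x\<^sup>2)"
    using assms \<open>x\<^sup>2 > 1\<close> by (simp add: field_simps)
  ultimately show ?thesis
    using geometric_sums by metis
qed

lemma inverse_square_Suc_sums: "(\<lambda>m. 1 / (real (Suc m))\<^sup>2) sums (pi\<^sup>2 / 6)"
  using inverse_squares_sums by (simp add: add.commute)

lemma multiplicative_inverse_square: "multiplicative_function (\<lambda>m. 1 / (real m)\<^sup>2)"
  by (simp add: multiplicative_function_def power_mult_distrib)

lemma inverse_square_power: "1 / (x ^ k)\<^sup>2 = (1 / x\<^sup>2) ^ k" for x :: real
  by (simp add: power_one_over flip: power_mult) (simp add: mult.commute)

lemma prod_zeta2_factors_le: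
  "(\<Prod>p | prime p \<and> p \<le> N. (real p)\<^sup>2 / ((real p)\<^sup>2 - 1)) \<le> pi\<^sup>2 / 6"
proof -
  have partial_le: "(\<Prod>p | prime p \<and> p \<le> N. \<Sum>k<K. (1 / (real p)\<^sup>2) ^ k) \<le> pi\<^sup>2 / 6" for K
  proof -
    have "(\<Prod>p | prime p \<and> p \<le> N. \<Sum>k<K. (1 / (real p)\<^sup>2) ^ k) =
        (\<Sum>m\<in>smooth_numbers K {p. prime p \<and> p \<le> N}. 1 / (real m)\<^sup>2)"
      using prod_sum_prime_powers_eq_sum_smooth_numbers[OF multiplicative_inverse_square finite_primes_le]
      by (simp add: inverse_square_power)
    also have "\<dots> \<le> (\<Sum>j. 1 / (real (Suc (j + 0)))\<^sup>2)"
    proof (rule sum_le_suminf_tail)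
      show "summable (\<lambda>j. 1 / (real (Suc (j + 0)))\<^sup>2)"
        using sums_summable[OF inverse_square_Suc_sums] by simp
      show "finite (smooth_numbers K {p. prime p \<and> p \<le> N})"
        by (rule finite_smooth_numbers[OF finite_primes_le]) simp
    qed (simp_all add: smooth_numbers_def)
    finally show ?thesis
      using sums_unique[OF inverse_square_Suc_sums] by simp
  qed
  have "(\<lambda>K. \<Prod>p | prime p \<and> p \<le> N. \<Sum>k<K. (1 / (real p)\<^sup>2) ^ k) \<longlonglongrightarrow>
      (\<Prod>p | prime p \<and> p \<le> N. (real p)\<^sup>2 / ((real p)\<^sup>2 - 1))"
    using geometric_sums_inverse_square prime_gt_1_nat
    by (intro tendsto_prod) (simp add: sums_def)
  then show ?thesis
    by (rule LIMSEQ_le_const2) (use partial_le in blast)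
qed

lemma prod_zeta2_factors_tendsto:
  "(\<lambda>N. \<Prod>p | prime p \<and> p \<le> N. (real p)\<^sup>2 / ((real p)\<^sup>2 - 1)) \<longlonglongrightarrow> pi\<^sup>2 / 6"
proof (rule tendsto_sandwich[OF _ _ _ tendsto_const])
  have "(\<lambda>N. \<Prod>p | prime p \<and> p \<le> N. \<Sum>k\<le>N. 1 / (real (p ^ k))\<^sup>2) \<longlonglongrightarrow> (\<Sum>m. 1 / (real (Suc m))\<^sup>2)"
    using sums_summable[OF inverse_square_Suc_sums]
    by (intro euler_product_tendsto multiplicative_inverse_square) simp
  then show "(\<lambda>N. \<Prod>p | prime p \<and> p \<le> N. \<Sum>k\<le>N. (1 / (real p)\<^sup>2) ^ k) \<longlonglongrightarrow> pi\<^sup>2 / 6"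
    using sums_unique[OF inverse_square_Suc_sums] by (simp add: inverse_square_power)
  show "\<forall>\<^sub>F N in sequentially. (\<Prod>p | prime p \<and> p \<le> N. \<Sum>k\<le>N. (1 / (real p)\<^sup>2) ^ k) \<le>
      (\<Prod>p | prime p \<and> p \<le> N. (real p)\<^sup>2 / ((real p)\<^sup>2 - 1))"
  proof (intro always_eventually allI prod_mono conjI sum_nonneg)
    fix N p :: nat assume "p \<in> {p. prime p \<and> p \<le> N}"
    then have sums: "(\<lambda>k. (1 / (real p)\<^sup>2) ^ k) sums ((real p)\<^sup>2 / ((real p)\<^sup>2 - 1))"
      using geometric_sums_inverse_square prime_gt_1_nat by simp
    show "(\<Sum>k\<le>N. (1 / (real p)\<^sup>2) ^ k) \<le> (real p)\<^sup>2 / ((real p)\<^sup>2 - 1)"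
      using sum_le_suminf[OF sums_summable[OF sums], of "{..N}"] sums_unique[OF sums] by simp
  qed simp
  show "\<forall>\<^sub>F N in sequentially. (\<Prod>p | prime p \<and> p \<le> N. (real p)\<^sup>2 / ((real p)\<^sup>2 - 1)) \<le> pi\<^sup>2 / 6"
    using prod_zeta2_factors_le by simp
qed

section \<open>The singular series\<close>

lemma has_prod_primes:
  assumes "(\<lambda>N. \<Prod>p | prime p \<and> p \<le> N. f p) \<longlonglongrightarrow> L" and "L \<noteq> 0"
  shows "(\<lambda>p. if prime p then f p else 1) has_prod L"
proof -
  have "(\<Prod>i\<le>N. if prime (i + 0) then f (i + 0) else 1) = (\<Prod>p | prime p \<and> p \<le> N. f p)" for N
    by (simp add: prod.If_cases Collect_conj_eq Int_commute atMost_def)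
  then show ?thesis
    using assms unfolding has_prod_def raw_has_prod_def by simp
qed

lemma sum_atMost_vanishing_from_two:
  fixes g :: "nat \<Rightarrow> 'a :: comm_monoid_add"
  assumes "\<And>k. k \<ge> 2 \<Longrightarrow> g k = 0"
  shows "(\<Sum>k\<le>N. g k) = (if N = 0 then g 0 else g 0 + g 1)"
  using assms by (induction N) auto

lemma multiplicative_Cbar: "multiplicative_function (\<lambda>q. Cbar q n)"
  using Cbar_1 by (simp add: multiplicative_function_def Cbar_mult)

lemma Cbar_prime_power_sums:
  assumes "prime p"
  shows "(\<lambda>k. Cbar (p ^ Suc k) n) sums Cbar p n"
proof -
  have "Cbar (p ^ Suc k) n = 0" if "k > 0" for k
    using Cbar_prime_power[OF assms, of "Suc k"] that by simp
  then have "(\<lambda>k. Cbar (p ^ Suc k) n) = (\<lambda>k. if k = 0 then Cbar p n else 0)"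
    by (auto simp: fun_eq_iff simp del: power_Suc)
  then show ?thesis
    using sums_single[of 0 "\<lambda>_. Cbar p n"] by simp
qed

lemma zeta2_factor_identities:
  fixes x :: real
  assumes "x > 1"
  shows "1 + 1 / (x\<^sup>2 - 1) = x\<^sup>2 / (x\<^sup>2 - 1)"
    and "1 - 1 / (x + 1) = x\<^sup>2 / (x\<^sup>2 - 1) * ((x - 1) / x)"
    and "x\<^sup>2 / (x\<^sup>2 - 1) \<ge> 1"
proof -
  have "x\<^sup>2 > 1"
    using assms by (simp add: one_less_power)
  then have nz: "x\<^sup>2 - 1 \<noteq> 0" "x + 1 \<noteq> 0" "x \<noteq> 0"
    using assms by linarith+
  then show "1 + 1 / (x\<^sup>2 - 1) = x\<^sup>2 / (x\<^sup>2 - 1)"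
    by (simp add: field_simps)
  show "1 - 1 / (x + 1) = x\<^sup>2 / (x\<^sup>2 - 1) * ((x - 1) / x)"
    using nz by (simp add: field_simps) (simp add: algebra_simps power2_eq_square)
  show "x\<^sup>2 / (x\<^sup>2 - 1) \<ge> 1"
    using \<open>x\<^sup>2 > 1\<close> by simp
qed

lemma one_plus_Cbar_prime:
  assumes "prime p"
  shows "1 + Cbar p (int n) = of_real ((real p)\<^sup>2 / ((real p)\<^sup>2 - 1) * (if p dvd n then (real p - 1) / real p else 1))"
proof -
  have "real p > 1"
    using prime_gt_1_nat[OF assms] by simp
  have "1 + Cbar p (int n) = of_real (1 + (if int p dvd int n then - 1 / (real p + 1) else 1 / ((real p)\<^sup>2 - 1)))"
    using assms by (simp add: Cbar_prime)
  also have "1 + (if int p dvd int n then - 1 / (real p + 1) else 1 / ((real p)\<^sup>2 - 1)) =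
      (real p)\<^sup>2 / ((real p)\<^sup>2 - 1) * (if p dvd n then (real p - 1) / real p else 1)"
    using zeta2_factor_identities(1,2)[OF \<open>real p > 1\<close>] by simp
  finally show ?thesis .
qed

lemma one_plus_norm_Cbar_prime_le:
  assumes "prime p"
  shows "1 + norm (Cbar p n) \<le> (real p)\<^sup>2 / ((real p)\<^sup>2 - 1) * (if int p dvd n then 2 else 1)"
proof -
  define z where "z = (real p)\<^sup>2 / ((real p)\<^sup>2 - 1)"
  define w where "w = 1 / (real p + 1)"
  have p: "real p > 1"
    using prime_gt_1_nat[OF assms] by simp
  have "1 \<le> z" "1 / ((real p)\<^sup>2 - 1) = z - 1"
    using zeta2_factor_identities(1,3)[OF p] by (simp_all add: z_def)
  moreover have "0 \<le> w" "w \<le> 1" "- 1 / (real p + 1) = - w"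
    using p by (simp_all add: w_def)
  ultimately have "1 + \<bar>if int p dvd n then - w else z - 1\<bar> \<le> z * (if int p dvd n then 2 else 1)"
    by auto
  then show ?thesis
    by (simp only: Cbar_prime[OF assms] norm_of_real z_def[symmetric]
        \<open>- 1 / (real p + 1) = - w\<close> \<open>1 / ((real p)\<^sup>2 - 1) = z - 1\<close>)
qed

lemma prod_primes_dvd_two_le:
  assumes "n > 0"
  shows "(\<Prod>p | prime p \<and> p \<le> N. if p dvd n then 2 else 1 :: real) \<le> 2 ^ n"
proof -
  have "(\<Prod>p | prime p \<and> p \<le> N. if p dvd n then 2 else 1 :: real) = 2 ^ card {p. prime p \<and> p \<le> N \<and> p dvd n}"
    by (simp add: prod.If_cases finite_primes_le Collect_conj_eq Int_assoc)
  also have "\<dots> \<le> 2 ^ n"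
  proof (rule power_increasing)
    have "{p. prime p \<and> p \<le> N \<and> p dvd n} \<subseteq> {1..n}"
      using assms by (auto dest: dvd_imp_le prime_gt_0_nat)
    then show "card {p. prime p \<and> p \<le> N \<and> p dvd n} \<le> n"
      using card_mono[of "{1..n}"] by fastforce
  qed simp
  finally show ?thesis .
qed

lemma summable_norm_Cbar:
  assumes "n > 0"
  shows "summable (\<lambda>q. norm (Cbar (Suc q) (int n)))"
proof (rule summable_multiplicative_function_bounded)
  show "multiplicative_function (\<lambda>q. norm (Cbar q (int n)))"
    using multiplicative_Cbar[of "int n"] by (simp add: multiplicative_function_def norm_mult)
  fix N
  have "(\<Prod>p | prime p \<and> p \<le> N. \<Sum>k\<le>N. norm (Cbar (p ^ k) (int n))) \<le>
      (\<Prod>p | prime p \<and> p \<le> N. (real p)\<^sup>2 / ((real p)\<^sup>2 - 1) * (if p dvd n then 2 else 1))"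
  proof (rule prod_mono)
    fix p assume "p \<in> {p. prime p \<and> p \<le> N}"
    then have p: "prime p"
      by simp
    have "(\<Sum>k\<le>N. norm (Cbar (p ^ k) (int n))) \<le> 1 + norm (Cbar p (int n))"
      using Cbar_prime_power[OF p] Cbar_1 by (simp add: sum_atMost_vanishing_from_two)
    also have "\<dots> \<le> (real p)\<^sup>2 / ((real p)\<^sup>2 - 1) * (if p dvd n then 2 else 1)"
      using one_plus_norm_Cbar_prime_le[OF p, of "int n"] by simp
    finally show "0 \<le> (\<Sum>k\<le>N. norm (Cbar (p ^ k) (int n))) \<and>
        (\<Sum>k\<le>N. norm (Cbar (p ^ k) (int n))) \<le> (real p)\<^sup>2 / ((real p)\<^sup>2 - 1) * (if p dvd n then 2 else 1)"
      by (simp add: sum_nonneg)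
  qed
  also have "\<dots> = (\<Prod>p | prime p \<and> p \<le> N. (real p)\<^sup>2 / ((real p)\<^sup>2 - 1)) *
      (\<Prod>p | prime p \<and> p \<le> N. if p dvd n then 2 else 1)"
    by (rule prod.distrib)
  also have "\<dots> \<le> pi\<^sup>2 / 6 * 2 ^ n"
    using prod_zeta2_factors_le prod_primes_dvd_two_le[OF assms]
    by (intro mult_mono) (auto intro: prod_nonneg)
  finally show "(\<Prod>p | prime p \<and> p \<le> N. \<Sum>k\<le>N. norm (Cbar (p ^ k) (int n))) \<le> pi\<^sup>2 / 6 * 2 ^ n" .
qed simp

lemma tendsto_prod_one_plus_Cbar:
  assumes "n > 0"
  shows "(\<lambda>N. \<Prod>p | prime p \<and> p \<le> N. 1 + Cbar p (int n)) \<longlonglongrightarrow> (\<Sum>q. Cbar (Suc q) (int n))"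
proof -
  have "(\<Prod>p | prime p \<and> p \<le> N. \<Sum>k\<le>N. Cbar (p ^ k) (int n)) = (\<Prod>p | prime p \<and> p \<le> N. 1 + Cbar p (int n))" for N
    using Cbar_prime_power prime_gt_0_nat Cbar_1
    by (intro prod.cong refl) (auto simp: sum_atMost_vanishing_from_two)
  then show ?thesis
    using euler_product_tendsto[OF multiplicative_Cbar summable_norm_Cbar[OF assms]] by simp
qed

lemma prod_primes_le_dvd_eq:
  fixes f :: "nat \<Rightarrow> 'a :: comm_monoid_mult"
  assumes "n > 0" "N \<ge> n"
  shows "(\<Prod>p | prime p \<and> p \<le> N. if p dvd n then f p else 1) = (\<Prod>p\<in>prime_factors n. f p)"
proof -
  have "{p. prime p \<and> p \<le> N \<and> p dvd n} = prime_factors n"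
    using assms by (auto simp: prime_factors_dvd dest: dvd_imp_le)
  then show ?thesis
    using prod.inter_filter[OF finite_primes_le[of N], where g = f and P = "\<lambda>p. p dvd n"] by simp
qed

lemma tendsto_prod_one_plus_Cbar_zeta2:
  assumes "n > 0"
  shows "(\<lambda>N. \<Prod>p | prime p \<and> p \<le> N. 1 + Cbar p (int n)) \<longlonglongrightarrow>
    of_real (pi\<^sup>2 / 6) * (\<Prod>p \<in> prime_factors n. (of_nat p - 1) / of_nat p)"
proof -
  have "(\<Prod>p | prime p \<and> p \<le> N. 1 + Cbar p (int n)) =
      of_real (\<Prod>p | prime p \<and> p \<le> N. (real p)\<^sup>2 / ((real p)\<^sup>2 - 1)) * (\<Prod>p \<in> prime_factors n. (of_nat p - 1) / of_nat p)"
    if "N \<ge> n" for N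
  proof -
    have "(\<Prod>p | prime p \<and> p \<le> N. 1 + Cbar p (int n)) = (\<Prod>p | prime p \<and> p \<le> N.
        of_real ((real p)\<^sup>2 / ((real p)\<^sup>2 - 1) * (if p dvd n then (real p - 1) / real p else 1)))"
      by (intro prod.cong refl) (simp only: one_plus_Cbar_prime mem_Collect_eq)
    also have "\<dots> = of_real ((\<Prod>p | prime p \<and> p \<le> N. (real p)\<^sup>2 / ((real p)\<^sup>2 - 1)) *
        (\<Prod>p | prime p \<and> p \<le> N. if p dvd n then (real p - 1) / real p else 1))"
      by (simp only: flip: of_real_prod) (simp only: prod.distrib)
    also have "(\<Prod>p | prime p \<and> p \<le> N. if p dvd n then (real p - 1) / real p else 1) =
        (\<Prod>p \<in> prime_factors n. (real p - 1) / real p)"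
      by (rule prod_primes_le_dvd_eq[OF assms that])
    finally show ?thesis
      by (simp add: of_real_prod)
  qed
  then have eventually_eq: "\<forall>\<^sub>F N in sequentially. of_real (\<Prod>p | prime p \<and> p \<le> N. (real p)\<^sup>2 / ((real p)\<^sup>2 - 1)) *
      (\<Prod>p \<in> prime_factors n. (of_nat p - 1) / of_nat p) = (\<Prod>p | prime p \<and> p \<le> N. 1 + Cbar p (int n))"
    by (intro eventually_sequentiallyI[of n]) simp
  have "(\<lambda>N. of_real (\<Prod>p | prime p \<and> p \<le> N. (real p)\<^sup>2 / ((real p)\<^sup>2 - 1)) *
      (\<Prod>p \<in> prime_factors n. (of_nat p - 1) / of_nat p)) \<longlonglongrightarrow>
      (of_real (pi\<^sup>2 / 6) * (\<Prod>p \<in> prime_factors n. (of_nat p - 1) / of_nat p) :: complex)"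
    by (intro tendsto_intros prod_zeta2_factors_tendsto)
  then show ?thesis
    using eventually_eq by (rule Lim_transform_eventually)
qed

theorem mainTheorem3:
  fixes n :: nat
  assumes "n > 0"
  shows "summable (\<lambda>q. norm (Cbar (Suc q) (int n))) \<and>
         (\<forall>p. prime p \<longrightarrow> summable (\<lambda>k. Cbar (p ^ Suc k) (int n))) \<and>
         ((\<lambda>p. if prime p then 1 + (\<Sum>k. Cbar (p ^ Suc k) (int n)) else 1)
           has_prod (\<Sum>q. Cbar (Suc q) (int n))) \<and>
         (\<Sum>q. Cbar (Suc q) (int n))
           = of_real (pi ^ 2 / 6) * (\<Prod>p \<in> prime_factors n. (of_nat p - 1) / of_nat p)"
proof -
  have suminf_eq: "(\<Sum>q. Cbar (Suc q) (int n)) = of_real (pi ^ 2 / 6) * (\<Prod>p \<in> prime_factors n. (of_nat p - 1) / of_nat p)"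
    using tendsto_prod_one_plus_Cbar[OF assms] tendsto_prod_one_plus_Cbar_zeta2[OF assms] by (rule LIMSEQ_unique)
  have "(of_nat p - 1) / of_nat p \<noteq> (0 :: complex)" if "p \<in> prime_factors n" for p
    using prime_gt_1_nat[of p] that by (simp add: in_prime_factors_imp_prime)
  then have "(\<Sum>q. Cbar (Suc q) (int n)) \<noteq> 0"
    unfolding suminf_eq by simp
  then have "(\<lambda>p. if prime p then 1 + Cbar p (int n) else 1) has_prod (\<Sum>q. Cbar (Suc q) (int n))"
    by (rule has_prod_primes[OF tendsto_prod_one_plus_Cbar[OF assms]])
  moreover have "(\<Sum>k. Cbar (p ^ Suc k) (int n)) = Cbar p (int n)" if "prime p" for p
    using Cbar_prime_power_sums[OF that] by (rule sums_unique[symmetric])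
  ultimately have "(\<lambda>p. if prime p then 1 + (\<Sum>k. Cbar (p ^ Suc k) (int n)) else 1) has_prod (\<Sum>q. Cbar (Suc q) (int n))"
    by (simp cong: if_cong)
  then show ?thesis
    using summable_norm_Cbar[OF assms] Cbar_prime_power_sums sums_summable suminf_eq by blast
qed

end
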